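(* For any constant $T_1>0$, there exists a unique $f\in L_1[0,T_1]$ such that \[w_-(e^{-T_1+t})+\int_t^{T_1}w_-(e^{-s+t})f(s)\,ds=1\quad\forall t\in[0,T_1].\]
   Context: $w_-:[0,1]\to[0,1]$ is strictly increasing, thrice differentiable, with $w_-(0)=0$, $w_-(1)=1$, $w_-'(0)>1$, $w_-'(1)>1$, $w_-'''>0$. *)

theory Defs
  imports "HOL-Analysis.Analysis"
begin

end

(*
  With K u s = w'(e^(u-s)) e^(u-s) one has w(e^(t-s)) = 1 - \<integral>_t^s K u s du, so after exchanging
  the order of integration the equation at time t reads \<integral>_t^T (f u - K u T - V f u) du = 0,
  where V f u = \<integral>_u^T K u s f s ds.  As this holds for every t, the equation is equivalent to
  the Volterra equation of the second kind f = K(-, T) + V f almost everywhere on [0, T].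
  The kernel is bounded, so the Picard iterates contract in the sup-norm weighted by
  e^(2B(T-u)) and converge to a bounded solution, and a Gronwall argument gives uniqueness.
*)

theory Submission
  imports Defs
begin

lemma AE_zero_if_integral_greaterThan_zero:
  fixes r :: "real \<Rightarrow> real"
  assumes r: "integrable lborel r" and tails: "\<And>x. (LINT u:{x<..}|lborel. r u) = 0"
  shows "AE u in lborel. r u = 0"
proof -
  have density_greaterThan:
    "emeasure (density lborel h) {x<..} = ennreal (LINT u:{x<..}|lborel. h u)"
    if h: "integrable lborel h" "\<And>u. 0 \<le> h u" for h :: "real \<Rightarrow> real" and x
  proof -
    have "emeasure (density lborel h) {x<..} = (\<integral>\<^sup>+ u. ennreal (indicator {x<..} u * h u) \<partial>lborel)"
      using h by (subst emeasure_density) (auto intro!: nn_integral_cong simp: indicator_def)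
    also have "\<dots> = ennreal (LINT u:{x<..}|lborel. h u)"
      using h integrable_mult_indicator[of "{x<..}" lborel h]
      by (subst nn_integral_eq_integral) (auto simp: set_lebesgue_integral_def)
    finally show ?thesis .
  qed
  \<comment> \<open>The positive and negative parts of \<open>r\<close> are densities of finite measures that agree
    on all rays \<open>{x<..}\<close>, hence coincide.\<close>
  define p where "p u = max 0 (r u)" for u
  define q where "q u = max 0 (- r u)" for u
  have [measurable]: "r \<in> borel_measurable borel"
    using borel_measurable_integrable[OF r] by simp
  have p: "integrable lborel p" and q: "integrable lborel q"
    unfolding p_def q_def using r by auto
  have p_nonneg: "\<And>u. 0 \<le> p u" and q_nonneg: "\<And>u. 0 \<le> q u"
    by (auto simp: p_def q_def)
  have "(LINT u:{x<..}|lborel. p u) = (LINT u:{x<..}|lborel. q u)" for x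
  proof -
    have "(LINT u:{x<..}|lborel. p u) - (LINT u:{x<..}|lborel. q u) = (LINT u:{x<..}|lborel. r u)"
      using p q unfolding p_def q_def
      by (subst set_integral_diff(2)[symmetric])
         (auto simp: set_integrable_def
           intro!: integrable_mult_indicator[where 'b=real, simplified] set_lebesgue_integral_cong)
    then show ?thesis using tails[of x] by simp
  qed
  then have "density lborel p = density lborel q"
    by (intro measure_eqI_lessThan)
       (auto simp: density_greaterThan[OF p p_nonneg] density_greaterThan[OF q q_nonneg])
  moreover have "(\<integral>\<^sup>+ u. ennreal (p u) \<partial>lborel) \<noteq> \<infinity>"
    using nn_integral_eq_integral[OF p] by (auto simp: p_def)
  ultimately have "AE u in lborel. p u = q u"
    using p q by (subst (asm) finite_density_unique) (auto simp: p_def q_def)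
  then show ?thesis
    by eventually_elim (auto simp: p_def q_def)
qed

lemma AE_zero_if_tail_integrals_zero:
  fixes \<rho> :: "real \<Rightarrow> real"
  assumes \<rho>: "set_integrable lborel {0..T} \<rho>"
    and tails: "\<And>t. t \<in> {0..T} \<Longrightarrow> (LINT u:{t..T}|lborel. \<rho> u) = 0"
  shows "AE u in lborel. u \<in> {0..T} \<longrightarrow> \<rho> u = 0"
proof -
  define r where "r u = indicator {0..T} u * \<rho> u" for u
  have r: "integrable lborel r"
    using \<rho> unfolding set_integrable_def r_def by simp
  have "(LINT u:{x<..}|lborel. r u) = 0" for x
  proof (cases "x \<le> T \<and> 0 \<le> T")
    case True
    define t where "t = max x 0"
    have "set_integrable lborel {x<..} r" "set_integrable lborel {t..T} \<rho>"
      using r \<rho> unfolding set_integrable_def t_def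
      by (auto intro!: integrable_mult_indicator[where 'b=real, simplified]
            set_integrable_subset[OF \<rho>, unfolded set_integrable_def, simplified])
    then have "(LINT u:{x<..}|lborel. r u) = (LINT u:{t..T}|lborel. \<rho> u)"
      unfolding set_lebesgue_integral_def set_integrable_def
      by (intro integral_cong_AE)
         (use AE_lborel_singleton[of x] in \<open>auto simp: r_def t_def indicator_def\<close>)
    also have "\<dots> = 0"
      using tails True by (auto simp: t_def)
    finally show ?thesis .
  next
    case False
    then have "(\<lambda>u. indicator {x<..} u * r u) = (\<lambda>_. 0)"
      by (auto simp: r_def indicator_def)
    then show ?thesis
      by (simp add: set_lebesgue_integral_def)
  qed
  then have "AE u in lborel. r u = 0"
    by (rule AE_zero_if_integral_greaterThan_zero[OF r])
  then show ?thesis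
    by eventually_elim (auto simp: r_def)
qed

lemma set_integrable_Icc_bounded:
  fixes g :: "real \<Rightarrow> real"
  assumes [measurable]: "g \<in> borel_measurable borel"
    and bound: "\<And>x. x \<in> {a..b} \<Longrightarrow> \<bar>g x\<bar> \<le> M"
  shows "set_integrable lborel {a..b} g"
proof (rule set_integrable_bound[where f="\<lambda>_. M"])
  show "set_integrable lborel {a..b} (\<lambda>_. M)"
    by (rule borel_integrable_atLeastAtMost') auto
  show "set_borel_measurable lborel {a..b} g"
    unfolding set_borel_measurable_def by measurable
  show "AE x in lborel. x \<in> {a..b} \<longrightarrow> norm (g x) \<le> norm M"
    using bound by (auto intro!: AE_I2 order_trans[OF _ abs_ge_self])
qed

lemma antimono_zero_if_le_tail_integral:
  fixes \<phi> :: "real \<Rightarrow> real"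
  assumes nonneg: "\<And>t. t \<in> {0..T} \<Longrightarrow> 0 \<le> \<phi> t"
    and antimono: "\<And>t u. 0 \<le> t \<Longrightarrow> t \<le> u \<Longrightarrow> u \<le> T \<Longrightarrow> \<phi> u \<le> \<phi> t"
    and integrable: "\<And>t. t \<in> {0..T} \<Longrightarrow> set_integrable lborel {t..T} \<phi>"
    and le: "\<And>t. t \<in> {0..T} \<Longrightarrow> \<phi> t \<le> B * (LINT u:{t..T}|lborel. \<phi> u)"
    and B: "0 < B" and t: "t \<in> {0..T}"
  shows "\<phi> t = 0"
proof -
  define \<delta> where "\<delta> = 1 / (2 * B)"
  have \<delta>: "0 < \<delta>" "B * \<delta> = 1 / 2"
    using B by (auto simp: \<delta>_def)
  \<comment> \<open>If \<open>\<phi>\<close> vanishes on \<open>[T - n \<delta>, T]\<close>, then for \<open>t\<close> in the next interval of length \<open>\<delta>\<close>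
    the tail integral is at most \<open>\<delta> \<phi> t\<close>, so \<open>\<phi> t \<le> \<phi> t / 2\<close>.\<close>
  have vanishing: "\<phi> t = 0" if "t \<in> {0..T}" "T - real n * \<delta> \<le> t" for n t
    using that
  proof (induction n arbitrary: t)
    case 0
    then have "t = T" by simp
    moreover have "(LINT u:{T..T}|lborel. \<phi> u) = 0"
      unfolding set_lebesgue_integral_def
      by (rule integral_eq_zero_AE) (use AE_lborel_singleton[of T] in auto)
    ultimately show ?case
      using le[of T] nonneg[of T] \<open>t \<in> {0..T}\<close> by simp
  next
    case (Suc n)
    define t' where "t' = max t (T - real n * \<delta>)"
    have t': "t \<le> t'" "t' \<le> T" "t' - t \<le> \<delta>"
      using Suc.prems \<delta> by (auto simp: t'_def algebra_simps)
    have "(LINT u:{t..T}|lborel. \<phi> u) \<le> (LINT u:{t..T}|lborel. \<phi> t * indicator {t..t'} u)"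
    proof (rule set_integral_mono)
      show "set_integrable lborel {t..T} (\<lambda>u. \<phi> t * indicator {t..t'} u)"
        using Suc.prems nonneg
        by (intro set_integrable_Icc_bounded[where M="\<phi> t"]) (auto simp: indicator_def)
      fix u assume u: "u \<in> {t..T}"
      show "\<phi> u \<le> \<phi> t * indicator {t..t'} u"
      proof (cases "u \<le> t'")
        case True
        then show ?thesis using u Suc.prems antimono[of t u] by (auto simp: indicator_def)
      next
        case False
        then have "\<phi> u = 0" using Suc.IH[of u] Suc.prems u by (auto simp: t'_def)
        then show ?thesis using Suc.prems nonneg[of t] by (auto simp: indicator_def)
      qed
    qed (use integrable Suc.prems in auto)
    also have "\<dots> = \<phi> t * (t' - t)"
    proof -
      have restrict: "(\<lambda>u. indicator {t..T} u * (\<phi> t * indicator {t..t'} u))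
          = (\<lambda>u. \<phi> t * indicator {t..t'} u)"
        using t' by (auto simp: indicator_def)
      show ?thesis
        unfolding set_lebesgue_integral_def real_scaleR_def restrict using t' by simp
    qed
    also have "\<dots> \<le> \<phi> t * \<delta>"
      using t' nonneg[of t] Suc.prems by (intro mult_left_mono) auto
    finally have "(LINT u:{t..T}|lborel. \<phi> u) \<le> \<phi> t * \<delta>" .
    then have "\<phi> t \<le> B * (\<phi> t * \<delta>)"
      using le[of t] Suc.prems B by (meson mult_left_mono order_trans less_imp_le)
    also have "\<dots> = \<phi> t / 2"
      using \<delta> by (simp add: ac_simps)
    finally show ?case
      using nonneg[of t] Suc.prems by simp
  qed
  obtain n where "T < real n * \<delta>"
    using reals_Archimedean3[OF \<delta>(1)] by blast
  then have "T - real n * \<delta> \<le> t"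
    using t by simp
  with vanishing t show ?thesis
    by blast
qed

lemma AE_zero_if_abs_le_tail_integral:
  fixes h :: "real \<Rightarrow> real"
  assumes [measurable]: "h \<in> borel_measurable borel"
    and h: "set_integrable lborel {0..T} h" and B: "0 < B"
    and le: "AE u in lborel. u \<in> {0..T} \<longrightarrow> \<bar>h u\<bar> \<le> B * (LINT s:{u..T}|lborel. \<bar>h s\<bar>)"
  shows "AE u in lborel. u \<in> {0..T} \<longrightarrow> h u = 0"
proof -
  define \<phi> where "\<phi> u = (LINT s:{u..T}|lborel. \<bar>h s\<bar>)" for u
  have abs_h: "set_integrable lborel {t..T} (\<lambda>s. \<bar>h s\<bar>)" if "0 \<le> t" for t
    by (rule set_integrable_subset[OF set_integrable_abs[OF h]]) (use that in auto)
  have [measurable]: "\<phi> \<in> borel_measurable borel"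
    unfolding \<phi>_def set_lebesgue_integral_def indicator_def atLeastAtMost_iff by measurable
  have nonneg: "0 \<le> \<phi> t" for t
    unfolding \<phi>_def by (simp add: set_lebesgue_integral_def)
  have antimono: "\<phi> u \<le> \<phi> t" if "0 \<le> t" "t \<le> u" for t u
    unfolding \<phi>_def set_lebesgue_integral_def
    using abs_h[of t] abs_h[of u] that
    by (intro integral_mono) (auto simp: set_integrable_def indicator_def)
  have \<phi>_integrable: "set_integrable lborel {t..T} \<phi>" if "t \<in> {0..T}" for t
    using that nonneg antimono[of 0] by (intro set_integrable_Icc_bounded[where M="\<phi> 0"]) auto
  have "\<phi> t \<le> B * (LINT u:{t..T}|lborel. \<phi> u)" if t: "t \<in> {0..T}" for t
  proof -
    have "\<phi> t \<le> (LINT u:{t..T}|lborel. B * \<phi> u)"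
      unfolding \<phi>_def[of t]
      using abs_h[of t] set_integrable_mult_right[OF \<phi>_integrable[OF t], of B] t le
      by (intro set_integral_mono_AE) (auto elim!: AE_mp simp: \<phi>_def)
    then show ?thesis
      by simp
  qed
  then have "\<phi> 0 = 0"
    using antimono_zero_if_le_tail_integral[of T \<phi> B 0] nonneg antimono \<phi>_integrable B
    by (cases "0 \<le> T") (auto simp: \<phi>_def set_lebesgue_integral_def)
  then have "AE s in lborel. indicator {0..T} s * \<bar>h s\<bar> = 0"
    using integral_nonneg_eq_0_iff_AE[of lborel "\<lambda>s. indicator {0..T} s * \<bar>h s\<bar>"]
      set_integrable_abs[OF h]
    by (simp add: \<phi>_def set_lebesgue_integral_def set_integrable_def)
  then show ?thesis
    by eventually_elim (auto simp: indicator_def)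
qed

lemma set_integral_exp_Icc:
  fixes c :: real
  assumes "u \<le> T" "0 < c"
  shows "(LINT s:{u..T}|lborel. exp (c * (T - s))) = (exp (c * (T - u)) - 1) / c"
proof -
  have "(LINT s:{u..T}|lborel. exp (c * (T - s))) = - exp (c * (T - T)) / c - - exp (c * (T - u)) / c"
    unfolding set_lebesgue_integral_def
  proof (rule integral_FTC_atLeastAtMost[OF assms(1)])
    show "((\<lambda>s. - exp (c * (T - s)) / c) has_vector_derivative exp (c * (T - x)))
        (at x within {u..T})" for x
      unfolding has_real_derivative_iff_has_vector_derivative[symmetric]
      using assms by (auto intro!: derivative_eq_intros)
  qed (auto intro!: continuous_intros)
  then show ?thesis
    using assms by (simp add: field_simps)
qed

locale volterra_kernel =
  fixes K :: "real \<Rightarrow> real \<Rightarrow> real" and T B :: real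
  assumes kernel_measurable: "case_prod K \<in> borel_measurable borel"
    and kernel_bound: "\<And>u s. u \<le> s \<Longrightarrow> \<bar>K u s\<bar> \<le> B"
    and bound_pos: "0 < B"
begin

lemma measurable_kernel [measurable (raw)]:
  assumes "f \<in> borel_measurable M" "g \<in> borel_measurable M"
  shows "(\<lambda>x. K (f x) (g x)) \<in> borel_measurable M"
  using measurable_compose[OF measurable_Pair[OF assms] kernel_measurable[folded borel_prod]]
  by simp

definition volterra :: "(real \<Rightarrow> real) \<Rightarrow> real \<Rightarrow> real" where
  "volterra f u = (LINT s:{u..T}|lborel. K u s * f s)"

lemma borel_measurable_volterra [measurable]:
  assumes [measurable]: "f \<in> borel_measurable borel"
  shows "volterra f \<in> borel_measurable borel"
  unfolding volterra_def set_lebesgue_integral_def indicator_def atLeastAtMost_iff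
  by measurable

lemma set_integrable_kernel_mult:
  assumes [measurable]: "f \<in> borel_measurable borel" and f: "set_integrable lborel {u..T} f"
  shows "set_integrable lborel {u..T} (\<lambda>s. K u s * f s)"
proof (rule set_integrable_bound[where f="\<lambda>s. B * f s"])
  show "set_integrable lborel {u..T} (\<lambda>s. B * f s)"
    using f by simp
  show "set_borel_measurable lborel {u..T} (\<lambda>s. K u s * f s)"
    unfolding set_borel_measurable_def by measurable
  show "AE s in lborel. s \<in> {u..T} \<longrightarrow> norm (K u s * f s) \<le> norm (B * f s)"
    using kernel_bound bound_pos by (auto intro!: AE_I2 mult_right_mono simp: abs_mult)
qed

lemma volterra_diff:
  assumes [measurable]: "f \<in> borel_measurable borel" "g \<in> borel_measurable borel"
    and "set_integrable lborel {u..T} f" "set_integrable lborel {u..T} g"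
  shows "volterra f u - volterra g u = volterra (\<lambda>s. f s - g s) u"
  unfolding volterra_def
  using set_integral_diff(2)[OF set_integrable_kernel_mult set_integrable_kernel_mult] assms
  by (simp add: right_diff_distrib)

lemma abs_volterra_le:
  assumes [measurable]: "f \<in> borel_measurable borel"
    and g: "set_integrable lborel {u..T} g" and le: "\<And>s. s \<in> {u..T} \<Longrightarrow> \<bar>f s\<bar> \<le> g s"
  shows "\<bar>volterra f u\<bar> \<le> B * (LINT s:{u..T}|lborel. g s)"
proof -
  have f: "set_integrable lborel {u..T} f"
  proof (rule set_integrable_bound[OF g])
    show "set_borel_measurable lborel {u..T} f"
      unfolding set_borel_measurable_def by measurable
    show "AE s in lborel. s \<in> {u..T} \<longrightarrow> norm (f s) \<le> norm (g s)"
      using le by (auto intro!: AE_I2 order_trans[OF _ abs_ge_self])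
  qed
  have "\<bar>volterra f u\<bar> \<le> (LINT s:{u..T}|lborel. \<bar>K u s * f s\<bar>)"
    unfolding volterra_def using set_integral_norm_bound[OF set_integrable_kernel_mult[OF _ f]]
    by simp
  also have "\<dots> \<le> (LINT s:{u..T}|lborel. B * g s)"
  proof (rule set_integral_mono)
    show "set_integrable lborel {u..T} (\<lambda>s. \<bar>K u s * f s\<bar>)"
      using set_integrable_abs[OF set_integrable_kernel_mult[OF _ f]] by simp
    show "set_integrable lborel {u..T} (\<lambda>s. B * g s)"
      using g by simp
    show "\<bar>K u s * f s\<bar> \<le> B * g s" if "s \<in> {u..T}" for s
      using kernel_bound[of u s] le[OF that] bound_pos that
      by (auto simp: abs_mult intro!: mult_mono)
  qed
  finally show ?thesis
    by simp
qed

lemma tendsto_volterra: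
  assumes [measurable]: "\<And>n. g n \<in> borel_measurable borel" "f \<in> borel_measurable borel"
    and lim: "\<And>s. s \<in> {u..T} \<Longrightarrow> (\<lambda>n. g n s) \<longlonglongrightarrow> f s"
    and bound: "\<And>n s. s \<in> {u..T} \<Longrightarrow> \<bar>g n s\<bar> \<le> M"
  shows "(\<lambda>n. volterra (g n) u) \<longlonglongrightarrow> volterra f u"
  unfolding volterra_def set_lebesgue_integral_def
proof (rule integral_dominated_convergence[where w="\<lambda>s. indicator {u..T} s * (B * M)"])
  show "integrable lborel (\<lambda>s. indicator {u..T} s * (B * M))"
    using borel_integrable_atLeastAtMost'[of u T "\<lambda>_. B * M"] by (simp add: set_integrable_def)
  show "AE s in lborel. (\<lambda>n. indicator {u..T} s *\<^sub>R (K u s * g n s))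
      \<longlonglongrightarrow> indicator {u..T} s *\<^sub>R (K u s * f s)"
    using lim by (auto intro!: AE_I2 tendsto_mult tendsto_const simp: indicator_def)
  show "AE s in lborel. norm (indicator {u..T} s *\<^sub>R (K u s * g n s))
      \<le> indicator {u..T} s * (B * M)" for n
    using kernel_bound bound bound_pos
    by (auto intro!: AE_I2 mult_mono simp: indicator_def abs_mult)
qed (unfold indicator_def atLeastAtMost_iff, measurable)

definition picard :: "(real \<Rightarrow> real) \<Rightarrow> nat \<Rightarrow> real \<Rightarrow> real" where
  "picard \<phi> n = ((\<lambda>g u. \<phi> u + volterra g u) ^^ n) (\<lambda>_. 0)"

lemma picard_0 [simp]: "picard \<phi> 0 = (\<lambda>_. 0)"
  by (simp add: picard_def)

lemma picard_Suc [simp]: "picard \<phi> (Suc n) u = \<phi> u + volterra (picard \<phi> n) u"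
  by (simp add: picard_def)

context
  fixes \<phi> :: "real \<Rightarrow> real" and C :: real
  assumes \<phi>_measurable [measurable]: "\<phi> \<in> borel_measurable borel"
    and \<phi>_bound: "\<And>u. u \<in> {0..T} \<Longrightarrow> \<bar>\<phi> u\<bar> \<le> C"
begin

lemma borel_measurable_picard [measurable]: "picard \<phi> n \<in> borel_measurable borel"
proof (induction n)
  case (Suc n)
  then show ?case
    by (simp add: picard_def)
qed simp

lemma picard_bounded: "\<exists>M. \<forall>u\<in>{0..T}. \<bar>picard \<phi> n u\<bar> \<le> M"
proof (induction n)
  case (Suc n)
  then obtain M where M: "\<And>u. u \<in> {0..T} \<Longrightarrow> \<bar>picard \<phi> n u\<bar> \<le> M"
    by blast
  have "\<bar>picard \<phi> (Suc n) u\<bar> \<le> C + B * (M * T)" if u: "u \<in> {0..T}" for u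
  proof -
    have "\<bar>volterra (picard \<phi> n) u\<bar> \<le> B * (LINT s:{u..T}|lborel. M)"
      using M u
      by (intro abs_volterra_le borel_integrable_atLeastAtMost') (auto simp del: picard_Suc)
    also have "\<dots> = B * (M * (T - u))"
      using u by (simp add: set_integral_const)
    also have "\<dots> \<le> B * (M * T)"
      using M[of u] u bound_pos by (intro mult_left_mono) auto
    finally show ?thesis
      using \<phi>_bound[OF u] by simp
  qed
  then show ?case
    by blast
qed (auto intro!: exI[of _ 0])

lemma set_integrable_picard:
  assumes "u \<in> {0..T}"
  shows "set_integrable lborel {u..T} (picard \<phi> n)"
proof -
  obtain M where "\<And>s. s \<in> {0..T} \<Longrightarrow> \<bar>picard \<phi> n s\<bar> \<le> M"
    using picard_bounded by blast
  then show ?thesis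
    using assms by (intro set_integrable_Icc_bounded[where M=M]) auto
qed

text \<open>The weight \<open>exp (2 B (T - u))\<close> makes the Picard map a contraction with factor
  \<open>1/2\<close>.\<close>

lemma picard_diff_le:
  assumes u: "u \<in> {0..T}"
  shows "\<bar>picard \<phi> (Suc n) u - picard \<phi> n u\<bar> \<le> C * (1/2) ^ n * exp (2 * B * (T - u))"
  using u
proof (induction n arbitrary: u)
  case 0
  have "C * 1 \<le> C * exp (2 * B * (T - u))"
    using 0 bound_pos \<phi>_bound[OF 0] by (intro mult_left_mono) auto
  then show ?case
    using \<phi>_bound[OF 0] by (simp add: volterra_def)
next
  case (Suc n)
  have diff: "picard \<phi> (Suc (Suc n)) u - picard \<phi> (Suc n) u
      = volterra (\<lambda>s. picard \<phi> (Suc n) s - picard \<phi> n s) u"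
    using Suc.prems by (simp add: volterra_diff set_integrable_picard)
  have "\<bar>volterra (\<lambda>s. picard \<phi> (Suc n) s - picard \<phi> n s) u\<bar>
      \<le> B * (LINT s:{u..T}|lborel. C * (1/2) ^ n * exp (2 * B * (T - s)))"
    using Suc
    by (intro abs_volterra_le borel_integrable_atLeastAtMost') (auto intro!: continuous_intros)
  also have "\<dots> = C * (1/2) ^ Suc n * (exp (2 * B * (T - u)) - 1)"
    using Suc.prems bound_pos by (simp add: set_integral_exp_Icc)
  also have "\<dots> \<le> C * (1/2) ^ Suc n * exp (2 * B * (T - u))"
    using \<phi>_bound[OF Suc.prems] abs_ge_zero[of "\<phi> u"] by (intro mult_left_mono) simp_all
  finally show ?case
    by (simp only: diff)
qed

lemma picard_eq_sum_diff: "picard \<phi> n u = (\<Sum>k<n. picard \<phi> (Suc k) u - picard \<phi> k u)"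
  using sum_lessThan_telescope[of "\<lambda>k. picard \<phi> k u" n] by simp

lemma abs_picard_le:
  assumes u: "u \<in> {0..T}"
  shows "\<bar>picard \<phi> n u\<bar> \<le> 2 * C * exp (2 * B * T)"
proof -
  have C: "0 \<le> C"
    using \<phi>_bound[OF u] abs_ge_zero[of "\<phi> u"] by linarith
  have "\<bar>picard \<phi> n u\<bar> \<le> (\<Sum>k<n. C * (1/2) ^ k * exp (2 * B * (T - u)))"
    unfolding picard_eq_sum_diff[of n]
    by (rule order_trans[OF sum_abs sum_mono]) (rule picard_diff_le[OF u])
  also have "\<dots> = C * exp (2 * B * (T - u)) * (\<Sum>k<n. (1/2) ^ k)"
    by (simp add: sum_distrib_left sum_distrib_right mult_ac)
  also have "\<dots> \<le> C * exp (2 * B * (T - u)) * 2"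
    using C by (intro mult_left_mono) (simp_all add: sum_gp_strict)
  also have "\<dots> \<le> C * exp (2 * B * T) * 2"
  proof -
    have "2 * B * (T - u) \<le> 2 * B * T"
      using u bound_pos by (intro mult_left_mono) auto
    then show ?thesis
      using mult_left_mono[of "exp (2 * B * (T - u))" "exp (2 * B * T)" C] C by simp
  qed
  finally show ?thesis
    by simp
qed

lemma convergent_picard:
  assumes u: "u \<in> {0..T}"
  shows "convergent (\<lambda>n. picard \<phi> n u)"
proof -
  have "summable (\<lambda>k. picard \<phi> (Suc k) u - picard \<phi> k u)"
  proof (rule summable_comparison_test')
    show "summable (\<lambda>k. C * exp (2 * B * (T - u)) * (1/2) ^ k)"
      by (intro summable_mult summable_geometric) simp
    show "norm (picard \<phi> (Suc k) u - picard \<phi> k u) \<le> C * exp (2 * B * (T - u)) * (1/2) ^ k" for k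
      using picard_diff_le[OF u, of k] by (simp add: ac_simps)
  qed
  then have "(\<lambda>n. \<Sum>k<n. picard \<phi> (Suc k) u - picard \<phi> k u)
      \<longlonglongrightarrow> (\<Sum>k. picard \<phi> (Suc k) u - picard \<phi> k u)"
    by (rule summable_LIMSEQ)
  then show ?thesis
    unfolding convergent_def picard_eq_sum_diff[symmetric] by blast
qed

lemma volterra_equation_solvable:
  "\<exists>f. f \<in> borel_measurable borel \<and> set_integrable lborel {0..T} f
     \<and> (\<forall>u\<in>{0..T}. f u = \<phi> u + volterra f u)"
proof -
  define M where "M = 2 * C * exp (2 * B * T)"
  \<comment> \<open>Cutting off outside \<open>[0, T]\<close> makes the pointwise limit exist everywhere, so that
    \<open>f\<close> is measurable.\<close>
  define f where "f u = lim (\<lambda>n. indicator {0..T} u * picard \<phi> n u)" for u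
  have lim: "(\<lambda>n. indicator {0..T} u * picard \<phi> n u) \<longlonglongrightarrow> f u" for u
  proof (cases "u \<in> {0..T}")
    case True
    then show ?thesis
      using convergent_picard[OF True] by (simp add: f_def convergent_LIMSEQ_iff)
  next
    case False
    then show ?thesis
      by (simp add: f_def limI[OF tendsto_const])
  qed
  have lim_picard: "(\<lambda>n. picard \<phi> n u) \<longlonglongrightarrow> f u" if "u \<in> {0..T}" for u
    using lim[of u] that by simp
  have f_measurable [measurable]: "f \<in> borel_measurable borel"
    by (rule borel_measurable_LIMSEQ_real[OF lim]) measurable
  have f_bound: "\<bar>f u\<bar> \<le> M" if "u \<in> {0..T}" for u
    using tendsto_rabs[OF lim_picard[OF that]]
    by (rule LIMSEQ_le_const2) (use abs_picard_le[OF that] in \<open>auto simp: M_def\<close>)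
  have "f u = \<phi> u + volterra f u" if u: "u \<in> {0..T}" for u
  proof -
    have "(\<lambda>n. volterra (picard \<phi> n) u) \<longlonglongrightarrow> volterra f u"
      using u abs_picard_le lim_picard
      by (intro tendsto_volterra[where M=M] borel_measurable_picard f_measurable) (auto simp: M_def)
    then have "(\<lambda>n. picard \<phi> (Suc n) u) \<longlonglongrightarrow> \<phi> u + volterra f u"
      unfolding picard_Suc by (rule tendsto_add[OF tendsto_const])
    then show ?thesis
      using LIMSEQ_unique LIMSEQ_Suc[OF lim_picard[OF u]] by blast
  qed
  moreover have "set_integrable lborel {0..T} f"
    using f_bound by (intro set_integrable_Icc_bounded[where M=M]) auto
  ultimately show ?thesis
    by (intro exI[of _ f]) auto
qed

end

lemma volterra_solution_unique:
  assumes [measurable]: "f \<in> borel_measurable borel" "g \<in> borel_measurable borel"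
    and f: "set_integrable lborel {0..T} f" and g: "set_integrable lborel {0..T} g"
    and f_eq: "AE u in lborel. u \<in> {0..T} \<longrightarrow> f u = \<phi> u + volterra f u"
    and g_eq: "AE u in lborel. u \<in> {0..T} \<longrightarrow> g u = \<phi> u + volterra g u"
  shows "AE u in lborel. u \<in> {0..T} \<longrightarrow> f u = g u"
proof -
  define h where "h u = f u - g u" for u
  have h_measurable [measurable]: "h \<in> borel_measurable borel"
    unfolding h_def by measurable
  have h: "set_integrable lborel {0..T} h"
    unfolding h_def using f g by (rule set_integral_diff(1))
  have "AE u in lborel. u \<in> {0..T} \<longrightarrow> \<bar>h u\<bar> \<le> B * (LINT s:{u..T}|lborel. \<bar>h s\<bar>)"
    using f_eq g_eq
  proof eventually_elim
    case (elim u)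
    show ?case
    proof
      assume u: "u \<in> {0..T}"
      have tail: "set_integrable lborel {u..T} k"
        if "set_integrable lborel {0..T} k" for k :: "real \<Rightarrow> real"
        by (rule set_integrable_subset[OF that]) (use u in auto)
      have "h u = volterra h u"
        using elim u tail f g unfolding h_def by (simp add: volterra_diff)
      moreover have "\<bar>volterra h u\<bar> \<le> B * (LINT s:{u..T}|lborel. \<bar>h s\<bar>)"
        by (rule abs_volterra_le[OF h_measurable tail[OF set_integrable_abs[OF h]]]) simp
      ultimately show "\<bar>h u\<bar> \<le> B * (LINT s:{u..T}|lborel. \<bar>h s\<bar>)"
        by simp
    qed
  qed
  then have "AE u in lborel. u \<in> {0..T} \<longrightarrow> h u = 0"
    by (rule AE_zero_if_abs_le_tail_integral[OF h_measurable h bound_pos])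
  then show ?thesis
    by eventually_elim (simp add: h_def)
qed

lemma integrable_volterra_integrand:
  assumes [measurable]: "f \<in> borel_measurable borel" and f: "set_integrable lborel {t..T} f"
  shows "integrable (lborel \<Otimes>\<^sub>M lborel)
    (\<lambda>(u, s). indicator {t..T} u * indicator {u..T} s * K u s * f s)"
proof -
  define F where "F = (\<lambda>u s. indicator {t..T} u * indicator {u..T} s * K u s * f s)"
  define G where "G u s = indicator {t..T} u * (B * (indicator {t..T} s * \<bar>f s\<bar>))" for u s
  have [measurable]: "case_prod F \<in> borel_measurable (lborel \<Otimes>\<^sub>M lborel)"
    unfolding F_def indicator_def atLeastAtMost_iff by measurable
  have abs_f: "integrable lborel (\<lambda>s. indicator {t..T} s * \<bar>f s\<bar>)"
    using set_integrable_abs[OF f] by (simp add: set_integrable_def)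
  have G_nonneg: "0 \<le> G u s" for u s
    using bound_pos by (simp add: G_def)
  have F_le_G: "\<bar>F u s\<bar> \<le> G u s" for u s
  proof (cases "u \<in> {t..T} \<and> s \<in> {u..T}")
    case True
    then have "\<bar>K u s\<bar> * \<bar>f s\<bar> \<le> B * \<bar>f s\<bar>"
      using kernel_bound[of u s] by (intro mult_right_mono) auto
    then show ?thesis
      using True by (simp add: F_def G_def abs_mult)
  next
    case False
    then show ?thesis
      using G_nonneg[of u s] by (auto simp: F_def)
  qed
  have G_u: "integrable lborel (G u)" for u
    using abs_f unfolding G_def by simp
  have "integrable lborel (\<lambda>s. F u s)" for u
  proof (rule Bochner_Integration.integrable_bound[OF G_u])
    show "(\<lambda>s. F u s) \<in> borel_measurable lborel"
      unfolding F_def indicator_def atLeastAtMost_iff by measurable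
    show "AE s in lborel. norm (F u s) \<le> norm (G u s)"
      using F_le_G G_nonneg by (simp add: abs_of_nonneg)
  qed
  moreover have "integrable lborel (\<lambda>u. LINT s|lborel. norm (F u s))"
  proof (rule Bochner_Integration.integrable_bound[where f="\<lambda>u. LINT s|lborel. G u s"])
    show "integrable lborel (\<lambda>u. LINT s|lborel. G u s)"
      using borel_integrable_atLeastAtMost'[of t T "\<lambda>_. B * (LINT s|lborel. indicator {t..T} s * \<bar>f s\<bar>)"]
      by (simp add: G_def set_integrable_def)
    have "(LINT s|lborel. norm (F u s)) \<le> (LINT s|lborel. G u s)" for u
      using calculation[of u] G_u F_le_G by (intro integral_mono) auto
    then show "AE u in lborel. norm (LINT s|lborel. norm (F u s)) \<le> norm (LINT s|lborel. G u s)"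
      by (intro AE_I2) (simp add: abs_of_nonneg integral_nonneg G_nonneg)
  qed measurable
  ultimately have "integrable (lborel \<Otimes>\<^sub>M lborel) (case_prod F)"
    by (intro lborel_pair.Fubini_integrable) auto
  then show ?thesis
    by (simp add: F_def)
qed

lemma
  assumes [measurable]: "f \<in> borel_measurable borel" and f: "set_integrable lborel {t..T} f"
  shows set_integrable_volterra: "set_integrable lborel {t..T} (volterra f)"
    and set_integrable_integral_kernel_mult:
      "set_integrable lborel {t..T} (\<lambda>s. (LINT u:{t..s}|lborel. K u s) * f s)"
    and integral_volterra_swap:
      "(LINT u:{t..T}|lborel. volterra f u)
        = (LINT s:{t..T}|lborel. (LINT u:{t..s}|lborel. K u s) * f s)"
proof -
  define F where "F = (\<lambda>u s. indicator {t..T} u * indicator {u..T} s * K u s * f s)"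
  have F: "integrable (lborel \<Otimes>\<^sub>M lborel) (case_prod F)"
    using integrable_volterra_integrand[OF _ f] by (simp add: F_def)
  have F_u: "(LINT u|lborel. F u s) = indicator {t..T} s * ((LINT u:{t..s}|lborel. K u s) * f s)" for s
  proof -
    have "F u s = indicator {t..T} s * f s * (indicator {t..s} u *\<^sub>R K u s)" for u
      by (auto simp: F_def indicator_def)
    then show ?thesis
      by (simp add: set_lebesgue_integral_def)
  qed
  have F_s: "(LINT s|lborel. F u s) = indicator {t..T} u * volterra f u" for u
  proof -
    have "F u s = indicator {t..T} u * (indicator {u..T} s *\<^sub>R (K u s * f s))" for s
      by (auto simp: F_def indicator_def)
    then show ?thesis
      by (simp add: volterra_def set_lebesgue_integral_def)
  qed
  show "set_integrable lborel {t..T} (volterra f)"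
    using lborel_pair.integrable_fst[OF F] by (simp add: F_s set_integrable_def)
  show "set_integrable lborel {t..T} (\<lambda>s. (LINT u:{t..s}|lborel. K u s) * f s)"
    using lborel_pair.integrable_snd[OF F] by (simp add: F_u set_integrable_def)
  show "(LINT u:{t..T}|lborel. volterra f u)
      = (LINT s:{t..T}|lborel. (LINT u:{t..s}|lborel. K u s) * f s)"
    using lborel_pair.Fubini_integral[OF F] by (simp add: F_u F_s set_lebesgue_integral_def)
qed

lemma set_integrable_kernel_left:
  "set_integrable lborel {t..T} (\<lambda>u. K u T)"
proof (rule set_integrable_Icc_bounded[where M=B])
  show "(\<lambda>u. K u T) \<in> borel_measurable borel"
    by measurable
qed (auto intro: kernel_bound)

lemma first_kind_eq_volterra:
  assumes [measurable]: "f \<in> borel_measurable borel" and f: "set_integrable lborel {t..T} f"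
  shows "(1 - (LINT u:{t..T}|lborel. K u T)) + (LINT s:{t..T}|lborel. (1 - (LINT u:{t..s}|lborel. K u s)) * f s)
       = 1 + (LINT u:{t..T}|lborel. f u - K u T - volterra f u)"
proof -
  have "(LINT s:{t..T}|lborel. (1 - (LINT u:{t..s}|lborel. K u s)) * f s)
      = (LINT s:{t..T}|lborel. f s) - (LINT s:{t..T}|lborel. (LINT u:{t..s}|lborel. K u s) * f s)"
    using set_integral_diff(2)[OF f set_integrable_integral_kernel_mult[OF _ f]]
    by (simp add: left_diff_distrib)
  moreover have "(LINT u:{t..T}|lborel. f u - K u T - volterra f u)
      = (LINT u:{t..T}|lborel. f u) - (LINT u:{t..T}|lborel. K u T) - (LINT u:{t..T}|lborel. volterra f u)"
    using set_integral_diff(2)[OF set_integral_diff(1)[OF f set_integrable_kernel_left]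
        set_integrable_volterra[OF _ f]]
      set_integral_diff(2)[OF f set_integrable_kernel_left]
    by simp
  ultimately show ?thesis
    using integral_volterra_swap[OF _ f] by simp
qed

lemma first_kind_iff_volterra_AE:
  assumes [measurable]: "f \<in> borel_measurable borel" and f: "set_integrable lborel {0..T} f"
  shows "(\<forall>t\<in>{0..T}. (1 - (LINT u:{t..T}|lborel. K u T))
            + (LINT s:{t..T}|lborel. (1 - (LINT u:{t..s}|lborel. K u s)) * f s) = 1)
     \<longleftrightarrow> (AE u in lborel. u \<in> {0..T} \<longrightarrow> f u = K u T + volterra f u)"
proof -
  define \<rho> where "\<rho> u = f u - K u T - volterra f u" for u
  have [measurable]: "\<rho> \<in> borel_measurable borel"
    unfolding \<rho>_def by measurable
  have \<rho>: "set_integrable lborel {0..T} \<rho>"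
    unfolding \<rho>_def
    by (intro set_integral_diff(1) f set_integrable_kernel_left set_integrable_volterra) measurable
  have tail: "set_integrable lborel {t..T} f" if "t \<in> {0..T}" for t
    by (rule set_integrable_subset[OF f]) (use that in auto)
  have "(\<forall>t\<in>{0..T}. (1 - (LINT u:{t..T}|lborel. K u T))
            + (LINT s:{t..T}|lborel. (1 - (LINT u:{t..s}|lborel. K u s)) * f s) = 1)
      \<longleftrightarrow> (\<forall>t\<in>{0..T}. (LINT u:{t..T}|lborel. \<rho> u) = 0)"
    using first_kind_eq_volterra[OF _ tail] by (simp add: \<rho>_def)
  also have "\<dots> \<longleftrightarrow> (AE u in lborel. u \<in> {0..T} \<longrightarrow> \<rho> u = 0)"
  proof
    assume "\<forall>t\<in>{0..T}. (LINT u:{t..T}|lborel. \<rho> u) = 0"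
    then show "AE u in lborel. u \<in> {0..T} \<longrightarrow> \<rho> u = 0"
      by (intro AE_zero_if_tail_integrals_zero[OF \<rho>]) auto
  next
    assume AE_zero: "AE u in lborel. u \<in> {0..T} \<longrightarrow> \<rho> u = 0"
    have "(LINT u:{t..T}|lborel. \<rho> u) = (LINT u:{t..T}|lborel. 0)" if "t \<in> {0..T}" for t
      using AE_zero that by (intro set_lebesgue_integral_cong_AE) (auto elim!: AE_mp)
    then show "\<forall>t\<in>{0..T}. (LINT u:{t..T}|lborel. \<rho> u) = 0"
      by simp
  qed
  finally show ?thesis
    by (simp add: \<rho>_def diff_diff_eq)
qed

end

lemma integral_deriv_comp_exp:
  fixes w w' :: "real \<Rightarrow> real"
  assumes deriv: "\<And>x. x \<in> {0..1} \<Longrightarrow> (w has_real_derivative w' x) (at x within {0..1})"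
    and cont: "continuous_on {0..1} w'" and "t \<le> s"
  shows "(LINT u:{t..s}|lborel. w' (exp (u - s)) * exp (u - s)) = w 1 - w (exp (t - s))"
proof -
  have "(LINT u:{t..s}|lborel. w' (exp (u - s)) * exp (u - s)) = w (exp (s - s)) - w (exp (t - s))"
    unfolding set_lebesgue_integral_def
  proof (rule integral_FTC_atLeastAtMost[OF \<open>t \<le> s\<close>])
    fix u assume u: "t \<le> u" "u \<le> s"
    then have "exp (u - s) \<in> {0..1}"
      by auto
    then have "(w has_real_derivative w' (exp (u - s))) (at (exp (u - s)) within (\<lambda>u. exp (u - s)) ` {t..s})"
      by (rule has_field_derivative_subset[OF deriv]) auto
    then have "((w \<circ> (\<lambda>u. exp (u - s))) has_real_derivative w' (exp (u - s)) * exp (u - s)) (at u within {t..s})"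
      by (rule DERIV_image_chain) (auto intro!: derivative_eq_intros)
    then show "((\<lambda>u. w (exp (u - s))) has_vector_derivative w' (exp (u - s)) * exp (u - s)) (at u within {t..s})"
      by (simp add: has_real_derivative_iff_has_vector_derivative o_def)
  next
    show "continuous_on {t..s} (\<lambda>u. w' (exp (u - s)) * exp (u - s))"
      by (intro continuous_intros continuous_on_compose2[OF cont]) auto
  qed
  then show ?thesis
    by simp
qed

locale weighting_equation =
  fixes w w' :: "real \<Rightarrow> real" and T :: real
  assumes deriv: "\<And>x. x \<in> {0..1} \<Longrightarrow> (w has_real_derivative w' x) (at x within {0..1})"
    and deriv_cont: "continuous_on {0..1} w'"
    and w_one: "w 1 = 1"
begin

text \<open>Only the values for \<open>u \<le> s\<close> matter; clamping the argument of \<open>w'\<close> makes the kernel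
  continuous everywhere.\<close>

definition kernel :: "real \<Rightarrow> real \<Rightarrow> real" where
  "kernel u s = w' (min 1 (exp (u - s))) * exp (u - s)"

lemma kernel_bounded: "\<exists>B>0. \<forall>u s. u \<le> s \<longrightarrow> \<bar>kernel u s\<bar> \<le> B"
proof -
  have "compact (w' ` {0..1})"
    by (rule compact_continuous_image[OF deriv_cont]) auto
  then obtain B where B: "0 < B" "\<And>x. x \<in> {0..1} \<Longrightarrow> \<bar>w' x\<bar> \<le> B"
    by (metis compact_imp_bounded bounded_pos image_eqI real_norm_def)
  have "\<bar>kernel u s\<bar> \<le> B" if "u \<le> s" for u s
  proof -
    have "\<bar>w' (min 1 (exp (u - s)))\<bar> * exp (u - s) \<le> B * 1"
      using B that by (intro mult_mono) auto
    then show ?thesis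
      by (simp add: kernel_def abs_mult)
  qed
  with B(1) show ?thesis
    by blast
qed

definition kernel_bound :: real where
  "kernel_bound = (SOME B. 0 < B \<and> (\<forall>u s. u \<le> s \<longrightarrow> \<bar>kernel u s\<bar> \<le> B))"

sublocale volterra_kernel kernel T kernel_bound
proof
  show "case_prod kernel \<in> borel_measurable borel"
  proof (rule borel_measurable_continuous_onI)
    show "continuous_on UNIV (case_prod kernel)"
      unfolding kernel_def case_prod_beta'
      by (intro continuous_intros continuous_on_compose2[OF deriv_cont]) auto
  qed
  show "0 < kernel_bound" "\<And>u s. u \<le> s \<Longrightarrow> \<bar>kernel u s\<bar> \<le> kernel_bound"
    using someI_ex[OF kernel_bounded] by (auto simp: kernel_bound_def)
qed

lemma w_exp_eq:
  assumes "t \<le> s"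
  shows "w (exp (t - s)) = 1 - (LINT u:{t..s}|lborel. kernel u s)"
proof -
  have "(LINT u:{t..s}|lborel. kernel u s) = (LINT u:{t..s}|lborel. w' (exp (u - s)) * exp (u - s))"
    by (intro set_lebesgue_integral_cong) (auto simp: kernel_def)
  then show ?thesis
    using integral_deriv_comp_exp[OF deriv deriv_cont assms] w_one by simp
qed

definition solves :: "(real \<Rightarrow> real) \<Rightarrow> bool" where
  "solves f \<longleftrightarrow> (\<forall>t\<in>{0..T}. w (exp (- T + t)) + (LINT s:{t..T}|lborel. w (exp (- s + t)) * f s) = 1)"

lemma solves_cong:
  assumes "\<And>s. s \<in> {0..T} \<Longrightarrow> f s = g s"
  shows "solves f \<longleftrightarrow> solves g"
proof -
  have "(LINT s:{t..T}|lborel. w (exp (- s + t)) * f s) = (LINT s:{t..T}|lborel. w (exp (- s + t)) * g s)"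
    if "t \<in> {0..T}" for t
    using assms that by (intro set_lebesgue_integral_cong) auto
  then show ?thesis
    by (simp add: solves_def)
qed

lemma solves_iff_volterra_AE:
  assumes [measurable]: "f \<in> borel_measurable borel" and f: "set_integrable lborel {0..T} f"
  shows "solves f \<longleftrightarrow> (AE u in lborel. u \<in> {0..T} \<longrightarrow> f u = kernel u T + volterra f u)"
proof -
  have "(w (exp (- T + t)) + (LINT s:{t..T}|lborel. w (exp (- s + t)) * f s) = 1)
    \<longleftrightarrow> ((1 - (LINT u:{t..T}|lborel. kernel u T))
          + (LINT s:{t..T}|lborel. (1 - (LINT u:{t..s}|lborel. kernel u s)) * f s) = 1)"
    if "t \<in> {0..T}" for t
  proof -
    have "(LINT s:{t..T}|lborel. w (exp (- s + t)) * f s)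
        = (LINT s:{t..T}|lborel. (1 - (LINT u:{t..s}|lborel. kernel u s)) * f s)"
      by (intro set_lebesgue_integral_cong) (auto simp: w_exp_eq)
    moreover have "w (exp (- T + t)) = 1 - (LINT u:{t..T}|lborel. kernel u T)"
      using w_exp_eq[of t T] that by simp
    ultimately show ?thesis
      by (simp only:)
  qed
  then show ?thesis
    unfolding solves_def first_kind_iff_volterra_AE[OF assms, symmetric] by blast
qed

lemma solves_exists:
  "\<exists>f. f \<in> borel_measurable borel \<and> set_integrable lborel {0..T} f \<and> solves f"
proof -
  have "(\<lambda>u. kernel u T) \<in> borel_measurable borel"
    by measurable
  moreover have "\<And>u. u \<in> {0..T} \<Longrightarrow> \<bar>kernel u T\<bar> \<le> kernel_bound"
    using kernel_bound by simp
  ultimately obtain f where f_measurable: "f \<in> borel_measurable borel"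
    and f: "set_integrable lborel {0..T} f"
    and fixpoint: "\<forall>u\<in>{0..T}. f u = kernel u T + volterra f u"
    using volterra_equation_solvable by metis
  have "solves f"
    unfolding solves_iff_volterra_AE[OF f_measurable f] using fixpoint by (intro AE_I2) blast
  with f_measurable f show ?thesis
    by blast
qed

lemma solves_unique:
  assumes f_measurable [measurable]: "f \<in> borel_measurable borel"
    and f: "set_integrable lborel {0..T} f" "solves f"
    and g: "set_integrable lborel {0..T} g" "solves g"
  shows "AE u in lborel. u \<in> {0..T} \<longrightarrow> g u = f u"
proof -
  \<comment> \<open>\<open>g\<close> itself need not be measurable; its restriction to \<open>[0, T]\<close> is.\<close>
  define g' where "g' = (\<lambda>u. indicator {0..T} u * g u)"
  have g'_eq: "\<And>u. u \<in> {0..T} \<Longrightarrow> g' u = g u"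
    by (simp add: g'_def)
  have g'_measurable [measurable]: "g' \<in> borel_measurable borel"
    using borel_measurable_integrable[OF g(1)[unfolded set_integrable_def]] unfolding g'_def by simp
  have "(\<lambda>u. indicator {0..T} u * g' u) = (\<lambda>u. indicator {0..T} u * g u)"
    by (auto simp: g'_def indicator_def)
  then have g': "set_integrable lborel {0..T} g'"
    using g(1) by (simp add: set_integrable_def)
  have "solves g'"
    using g(2) solves_cong[of g' g, OF g'_eq] by blast
  then have "AE u in lborel. u \<in> {0..T} \<longrightarrow> g' u = kernel u T + volterra g' u"
    using solves_iff_volterra_AE[OF g'_measurable g'] by blast
  moreover have "AE u in lborel. u \<in> {0..T} \<longrightarrow> f u = kernel u T + volterra f u"
    using f(2) solves_iff_volterra_AE[OF f_measurable f(1)] by blast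
  ultimately have "AE u in lborel. u \<in> {0..T} \<longrightarrow> g' u = f u"
    by (rule volterra_solution_unique[OF g'_measurable f_measurable g' f(1)])
  then show ?thesis
    by eventually_elim (simp add: g'_eq)
qed

end

theorem lemma7:
  fixes w w1 w2 w3 :: "real \<Rightarrow> real" and T1 :: real
  assumes into: "w ` {0..1} \<subseteq> {0..1}"
    and mono: "strict_mono_on {0..1} w"
    and d1: "\<And>x. x \<in> {0..1} \<Longrightarrow> (w has_real_derivative w1 x) (at x within {0..1})"
    and d2: "\<And>x. x \<in> {0..1} \<Longrightarrow> (w1 has_real_derivative w2 x) (at x within {0..1})"
    and d3: "\<And>x. x \<in> {0..1} \<Longrightarrow> (w2 has_real_derivative w3 x) (at x within {0..1})"
    and w0: "w 0 = 0" and w1': "w 1 = 1"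
    and dw0: "w1 0 > 1" and dw1: "w1 1 > 1"
    and d3pos: "\<And>x. x \<in> {0..1} \<Longrightarrow> w3 x > 0"
    and T1: "T1 > 0"
  shows "\<exists>f :: real \<Rightarrow> real.
           set_integrable lborel {0..T1} f
         \<and> (\<forall>t\<in>{0..T1}. w (exp (- T1 + t)) + (LINT s:{t..T1}|lborel. w (exp (- s + t)) * f s) = 1)
         \<and> (\<forall>g :: real \<Rightarrow> real. set_integrable lborel {0..T1} g
               \<and> (\<forall>t\<in>{0..T1}. w (exp (- T1 + t)) + (LINT s:{t..T1}|lborel. w (exp (- s + t)) * g s) = 1)
               \<longrightarrow> (AE s in lborel. s \<in> {0..T1} \<longrightarrow> g s = f s))"
proof -
  have "continuous_on {0..1} w1"
    unfolding continuous_on_eq_continuous_within using d2 DERIV_continuous by blast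
  then interpret weighting_equation w w1 T1
    using d1 w1' by unfold_locales
  obtain f where "f \<in> borel_measurable borel" "set_integrable lborel {0..T1} f" "solves f"
    using solves_exists by blast
  then show ?thesis
    using solves_unique unfolding solves_def by blast
qed

end
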